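(* Let $(A,*,\odot)$ be a $\mathrm{BiCom}$-algebra and let $d$ be a linear map on $A$ which is a derivation with respect to both $*$ and $\odot$. Define $x\star y=d(x)\odot y$. Then $(A,*,\star)$ is a $\mathrm{GD}^!$-algebra.
   Context: A $\mathrm{BiCom}$-algebra is a vector space with two bilinear operations $*$ and $\odot$, each associative and commutative, satisfying $(x\odot y)*z=x\odot(y*z)$. A $\mathrm{GD}^!$-algebra is a vector space with two bilinear operations $*$ and $\star$ such that $*$ is associative and commutative, and $(x\star y)\star z-x\star(y\star z)=(x\star z)\star y-x\star(z\star y)$, $x\star(y\star z)=y\star(x\star z)$, $x\star(y*z)=(x\star y)*z$, $x\star(y*z)+y\star(x*z)=(x*y)\star z$. *)

theory Defs
  imports Main "HOL.Vector_Spaces"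
begin

definition bilinear_op :: "('k::field \<Rightarrow> 'a::ab_group_add \<Rightarrow> 'a) \<Rightarrow> ('a \<Rightarrow> 'a \<Rightarrow> 'a) \<Rightarrow> bool" where
  "bilinear_op scale m \<longleftrightarrow>
     (\<forall>y. Vector_Spaces.linear scale scale (\<lambda>x. m x y)) \<and>
     (\<forall>x. Vector_Spaces.linear scale scale (\<lambda>y. m x y))"

definition assoc_op :: "('a \<Rightarrow> 'a \<Rightarrow> 'a) \<Rightarrow> bool" where
  "assoc_op m \<longleftrightarrow> (\<forall>x y z. m (m x y) z = m x (m y z))"

definition comm_op :: "('a \<Rightarrow> 'a \<Rightarrow> 'a) \<Rightarrow> bool" where
  "comm_op m \<longleftrightarrow> (\<forall>x y. m x y = m y x)"

definition BiCom_algebra ::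
  "('k::field \<Rightarrow> 'a::ab_group_add \<Rightarrow> 'a) \<Rightarrow> ('a \<Rightarrow> 'a \<Rightarrow> 'a) \<Rightarrow> ('a \<Rightarrow> 'a \<Rightarrow> 'a) \<Rightarrow> bool" where
  "BiCom_algebra scale ast odot \<longleftrightarrow>
     vector_space scale \<and>
     bilinear_op scale ast \<and> bilinear_op scale odot \<and>
     assoc_op ast \<and> comm_op ast \<and> assoc_op odot \<and> comm_op odot \<and>
     (\<forall>x y z. ast (odot x y) z = odot x (ast y z))"

definition GD_dual_algebra ::
  "('k::field \<Rightarrow> 'a::ab_group_add \<Rightarrow> 'a) \<Rightarrow> ('a \<Rightarrow> 'a \<Rightarrow> 'a) \<Rightarrow> ('a \<Rightarrow> 'a \<Rightarrow> 'a) \<Rightarrow> bool" where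
  "GD_dual_algebra scale ast star \<longleftrightarrow>
     vector_space scale \<and>
     bilinear_op scale ast \<and> bilinear_op scale star \<and>
     assoc_op ast \<and> comm_op ast \<and>
     (\<forall>x y z. star (star x y) z - star x (star y z) = star (star x z) y - star x (star z y)) \<and>
     (\<forall>x y z. star x (star y z) = star y (star x z)) \<and>
     (\<forall>x y z. star x (ast y z) = ast (star x y) z) \<and>
     (\<forall>x y z. star x (ast y z) + star y (ast x z) = star (ast x y) z)"

definition is_derivation :: "('a::plus \<Rightarrow> 'a \<Rightarrow> 'a) \<Rightarrow> ('a \<Rightarrow> 'a) \<Rightarrow> bool" where
  "is_derivation m d \<longleftrightarrow> (\<forall>x y. d (m x y) = m (d x) y + m x (d y))"

end

theory Submission
  imports Defs
begin

text \<open>With \<open>x \<star> y = d x \<odot> y\<close>, every \<open>GD\<^sup>!\<close> identity reduces to associativity and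
  commutativity of \<open>\<odot>\<close>, the compatibility \<open>(x \<odot> y) * z = x \<odot> (y * z)\<close>, and the
  Leibniz rule for \<open>d\<close>. The key observations are that the associator of \<open>\<star>\<close> equals
  \<open>(d (d x) \<odot> y) \<odot> z\<close>, which is symmetric in \<open>y, z\<close>, and that \<open>d\<close> being a derivation
  of \<open>*\<close> splits \<open>d (x * y) \<odot> z\<close> into the two terms of the last axiom.\<close>

lemma bilinear_op_precompose_left:
  assumes "bilinear_op scale m" and "Vector_Spaces.linear scale scale d"
  shows "bilinear_op scale (\<lambda>x y. m (d x) y)"
  unfolding bilinear_op_def
proof (intro conjI allI)
  fix y
  show "Vector_Spaces.linear scale scale (\<lambda>x. m (d x) y)"
    using Vector_Spaces.linear_compose[OF assms(2), of scale "\<lambda>x. m x y"] assms(1)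
    unfolding bilinear_op_def by (simp add: o_def)
next
  fix x
  show "Vector_Spaces.linear scale scale (\<lambda>y. m (d x) y)"
    using assms(1) unfolding bilinear_op_def by simp
qed

lemma bilinear_op_add_left:
  assumes "bilinear_op scale m"
  shows "m (a + b) c = m a c + m b c"
  using assms unfolding bilinear_op_def by (simp add: linear_iff)

lemma assoc_comm_left_commute:
  assumes "assoc_op m" and "comm_op m"
  shows "m x (m y z) = m y (m x z)"
  using assms unfolding assoc_op_def comm_op_def by metis

lemma assoc_comm_right_commute:
  assumes "assoc_op m" and "comm_op m"
  shows "m (m x y) z = m (m x z) y"
  using assms unfolding assoc_op_def comm_op_def by metis

lemma compatible_comm_mixed_assoc:
  assumes comp: "\<And>x y z. ast (odot x y) z = odot x (ast y z)"
    and "comm_op ast" and "comm_op odot"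
  shows "odot (ast a y) z = odot a (ast y z)"
proof -
  have "odot (ast a y) z = ast (odot z a) y"
    using assms(3) comp[symmetric] unfolding comm_op_def by metis
  also have "\<dots> = odot a (ast y z)"
    using assms(2,3) comp unfolding comm_op_def by metis
  finally show ?thesis .
qed

lemma derivation_associator:
  assumes "is_derivation odot d" and "assoc_op odot" and "bilinear_op scale odot"
  shows "odot (d (odot a y)) z - odot a (odot (d y) z) = odot (odot (d a) y) z"
  using assms bilinear_op_add_left[OF assms(3)]
  unfolding is_derivation_def assoc_op_def by simp

lemma derivation_precompose_associator_symmetric:
  assumes "is_derivation odot d" and "assoc_op odot" and "comm_op odot"
    and "bilinear_op scale odot"
  shows "odot (d (odot (d x) y)) z - odot (d x) (odot (d y) z) =
         odot (d (odot (d x) z)) y - odot (d x) (odot (d z) y)"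
  using assoc_comm_right_commute[OF assms(2,3)]
  by (simp add: derivation_associator[OF assms(1,2,4)])

lemma derivation_precompose_Leibniz:
  assumes "is_derivation ast d" and "bilinear_op scale odot"
    and comp: "\<And>x y z. ast (odot x y) z = odot x (ast y z)"
    and "comm_op ast" and "comm_op odot"
  shows "odot (d x) (ast y z) + odot (d y) (ast x z) = odot (d (ast x y)) z"
proof -
  note mixed = compatible_comm_mixed_assoc[OF comp assms(4,5)]
  have "odot (d (ast x y)) z = odot (ast (d x) y) z + odot (ast (d y) x) z"
    using assms(1,4) bilinear_op_add_left[OF assms(2)]
    unfolding is_derivation_def comm_op_def by metis
  then show ?thesis by (simp add: mixed)
qed

theorem mainTheorem4:
  fixes scale :: "'k::field \<Rightarrow> 'a::ab_group_add \<Rightarrow> 'a"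
    and ast odot :: "'a \<Rightarrow> 'a \<Rightarrow> 'a"
    and d :: "'a \<Rightarrow> 'a"
  assumes "BiCom_algebra scale ast odot"
    and "Vector_Spaces.linear scale scale d"
    and "is_derivation ast d"
    and "is_derivation odot d"
  shows "GD_dual_algebra scale ast (\<lambda>x y. odot (d x) y)"
proof -
  from assms(1) have "vector_space scale" "bilinear_op scale ast"
    and bil_odot: "bilinear_op scale odot" and "assoc_op ast" "comm_op ast"
    and assoc_odot: "assoc_op odot" and comm_odot: "comm_op odot"
    and comp: "\<And>x y z. ast (odot x y) z = odot x (ast y z)"
    unfolding BiCom_algebra_def by auto
  then show ?thesis
    unfolding GD_dual_algebra_def
    using bilinear_op_precompose_left[OF bil_odot assms(2)]
      derivation_precompose_associator_symmetric[OF assms(4) assoc_odot comm_odot bil_odot]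
      assoc_comm_left_commute[OF assoc_odot comm_odot]
      derivation_precompose_Leibniz[OF assms(3) bil_odot comp \<open>comm_op ast\<close> comm_odot]
    by (simp add: comp)
qed

end
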